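(* Let $\mathcal{P}\subset\mathbb{Q}^n$ be a finite point set whose position vectors span $\mathbb{R}^n$, and let $\mathbb{R}^n=W_1\oplus\cdots\oplus W_r$ be a decomposition into pairwise orthogonal subspaces. For $\ell\in[r]$ let $\mathrm{proj}_\ell$ denote orthogonal projection onto $W_\ell$ and $\mathcal{P}_\ell=\mathrm{proj}_\ell(\mathcal{P})$. Let $\pi$ be a permutation of $\mathcal{P}$. Then $\pi$ is a geometric automorphism of $\mathcal{P}$ such that $A_\pi(W_\ell)=W_\ell$ for each $\ell\in[r]$ if and only if $\pi$ is an induced geometric automorphism of each $\mathcal{P}_\ell$, $1\le\ell\le r$.
   Context: A geometric automorphism of a finite point set $\mathcal{Q}$ (in a Euclidean space) is a permutation $\sigma$ of $\mathcal{Q}$ with $\|q\|=\|\sigma(q)\|$ and $\|q-q'\|=\|\sigma(q)-\sigma(q')\|$ for all $q,q'\in\mathcal{Q}$. For $\mathcal{P}$ spanning $\mathbb{R}^n$ and $\pi$ a geometric automorphism of $\mathcal{P}$, $A_\pi$ is the unique orthogonal matrix with $A_\pi p=\pi(p)$ for all $p\in\mathcal{P}$. A subset $\Delta\subseteq\mathcal{P}$ is an $(\ell)$-equivalence class if $\Delta=\mathrm{proj}_\ell^{-1}(q)\cap\mathcal{P}$ for some $q\in\mathcal{P}_\ell$. A permutation $\pi$ of $\mathcal{P}$ respects $\mathcal{P}_\ell$ if it maps every $(\ell)$-equivalence class onto an $(\ell)$-equivalence class; it then induces the permutation $\pi_\ell$ of $\mathcal{P}_\ell$ given by $\pi_\ell(q)=\mathrm{proj}_\ell(\pi(\mathrm{proj}_\ell^{-1}(q)))$.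 $\pi$ is an induced geometric automorphism of $\mathcal{P}_\ell$ if $\pi$ respects $\mathcal{P}_\ell$ and $\pi_\ell$ is a geometric automorphism of $\mathcal{P}_\ell$. *)

theory Defs
  imports "HOL-Analysis.Analysis"
begin

definition geom_aut :: "('a::real_normed_vector) set \<Rightarrow> ('a \<Rightarrow> 'a) \<Rightarrow> bool" where
  "geom_aut Q \<sigma> \<longleftrightarrow> bij_betw \<sigma> Q Q
     \<and> (\<forall>q\<in>Q. norm (\<sigma> q) = norm q)
     \<and> (\<forall>q\<in>Q. \<forall>q'\<in>Q. norm (q - q') = norm (\<sigma> q - \<sigma> q'))"

definition A_mat :: "(real^'n) set \<Rightarrow> (real^'n \<Rightarrow> real^'n) \<Rightarrow> real^'n^'n" where
  "A_mat P \<pi> = (THE A. orthogonal_matrix A \<and> (\<forall>p\<in>P. A *v p = \<pi> p))"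

definition orth_proj :: "(real^'n) set \<Rightarrow> real^'n \<Rightarrow> real^'n" where
  "orth_proj W x = (THE y. y \<in> W \<and> (\<forall>w\<in>W. orthogonal (x - y) w))"

definition equiv_class :: "('a \<Rightarrow> 'b) \<Rightarrow> 'a set \<Rightarrow> 'a set \<Rightarrow> bool" where
  "equiv_class f P \<Delta> \<longleftrightarrow> (\<exists>q\<in>f ` P. \<Delta> = f -` {q} \<inter> P)"

definition respects_proj :: "('a \<Rightarrow> 'b) \<Rightarrow> 'a set \<Rightarrow> ('a \<Rightarrow> 'a) \<Rightarrow> bool" where
  "respects_proj f P \<pi> \<longleftrightarrow> (\<forall>\<Delta>. equiv_class f P \<Delta> \<longrightarrow> equiv_class f P (\<pi> ` \<Delta>))"

definition induced_perm :: "('a \<Rightarrow> 'b) \<Rightarrow> 'a set \<Rightarrow> ('a \<Rightarrow> 'a) \<Rightarrow> 'b \<Rightarrow> 'b" where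
  "induced_perm f P \<pi> q = the_elem (f ` \<pi> ` (f -` {q} \<inter> P))"

definition induced_geom_aut :: "('a \<Rightarrow> 'b::real_normed_vector) \<Rightarrow> 'a set \<Rightarrow> ('a \<Rightarrow> 'a) \<Rightarrow> bool" where
  "induced_geom_aut f P \<pi> \<longleftrightarrow> respects_proj f P \<pi> \<and> geom_aut (f ` P) (induced_perm f P \<pi>)"

end

theory Submission
  imports Defs
begin

text \<open>
  Both sides say that \<open>\<pi>\<close> preserves inner products, read in two ways. An orthogonal map
  leaving every \<open>W l\<close> invariant commutes with the orthogonal projections, so it carries the
  fibres of each projection to fibres and acts isometrically on the projected point sets.
  Conversely, the inner product of two points is the sum over \<open>l\<close> of the inner products of
  their projections, so isometries of all projected point sets make \<open>\<pi>\<close> an isometry; then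
  \<open>proj \<circ> A\<close> and \<open>proj\<close> have the same Gram form on \<open>P\<close>, hence everywhere, which forces
  \<open>proj \<circ> A = A \<circ> proj\<close> and thus \<open>A ` W l = W l\<close>.
\<close>

lemma geom_aut_iff_inner:
  fixes Q :: "'a::real_inner set"
  shows "geom_aut Q \<sigma> \<longleftrightarrow> bij_betw \<sigma> Q Q \<and> (\<forall>q\<in>Q. \<forall>q'\<in>Q. inner (\<sigma> q) (\<sigma> q') = inner q q')"
proof -
  have "(\<forall>q\<in>Q. norm (\<sigma> q) = norm q) \<and> (\<forall>q\<in>Q. \<forall>q'\<in>Q. norm (q - q') = norm (\<sigma> q - \<sigma> q'))
    \<longleftrightarrow> (\<forall>q\<in>Q. \<forall>q'\<in>Q. inner (\<sigma> q) (\<sigma> q') = inner q q')"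
  proof safe
    fix q q' assume "\<forall>q\<in>Q. norm (\<sigma> q) = norm q" "\<forall>q\<in>Q. \<forall>q'\<in>Q. norm (q - q') = norm (\<sigma> q - \<sigma> q')"
      and "q \<in> Q" "q' \<in> Q"
    then show "inner (\<sigma> q) (\<sigma> q') = inner q q'"
      by (simp add: dot_norm_neg[of "\<sigma> q"] dot_norm_neg[of q])
  next
    fix q assume "\<forall>q\<in>Q. \<forall>q'\<in>Q. inner (\<sigma> q) (\<sigma> q') = inner q q'" "q \<in> Q"
    then show "norm (\<sigma> q) = norm q" by (simp add: norm_eq_sqrt_inner)
  next
    fix q q' assume "\<forall>q\<in>Q. \<forall>q'\<in>Q. inner (\<sigma> q) (\<sigma> q') = inner q q'" "q \<in> Q" "q' \<in> Q"
    then show "norm (q - q') = norm (\<sigma> q - \<sigma> q')"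
      by (simp add: norm_eq_sqrt_inner inner_diff_left inner_diff_right)
  qed
  then show ?thesis unfolding geom_aut_def by blast
qed

lemma orthogonal_transformation_matrix_vector_mult:
  "orthogonal_transformation ((*v) A) \<longleftrightarrow> orthogonal_matrix (A :: real^'n^'n)"
  by (simp add: orthogonal_transformation_matrix matrix_of_matrix_vector_mul matrix_vector_mul_linear)

lemma inner_sum_scaleR_if_inner_preserving:
  assumes "\<forall>s\<in>S. \<forall>t\<in>S. inner (g s) (g t) = inner s t"
  shows "inner (\<Sum>s\<in>S. c s *\<^sub>R g s) (\<Sum>t\<in>S. d t *\<^sub>R g t)
       = inner (\<Sum>s\<in>S. c s *\<^sub>R s) (\<Sum>t\<in>S. d t *\<^sub>R t)"
  using assms by (simp add: inner_sum_left inner_sum_right)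

lemma inner_preserving_extends_to_orthogonal_transformation:
  fixes g :: "'a::euclidean_space \<Rightarrow> 'a"
  assumes fin: "finite P" and span: "span P = UNIV"
    and gram: "\<forall>s\<in>P. \<forall>t\<in>P. inner (g s) (g t) = inner s t"
  obtains f where "orthogonal_transformation f" and "\<forall>p\<in>P. f p = g p"
proof -
  have "\<exists>c. (\<Sum>v\<in>P. c v *\<^sub>R v) = x" for x
    using span span_finite[OF fin] by (metis (no_types, lifting) UNIV_I imageE)
  then obtain c where c: "\<And>x. (\<Sum>v\<in>P. c x v *\<^sub>R v) = x" by metis
  define f where "f x = (\<Sum>v\<in>P. c x v *\<^sub>R g v)" for x
  \<comment> \<open>Coordinates with respect to \<open>P\<close> are not unique, but by the Gram condition any choice gives \<open>f x\<close>.\<close>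
  have f_eq: "f x = (\<Sum>v\<in>P. u v *\<^sub>R g v)" if "(\<Sum>v\<in>P. u v *\<^sub>R v) = x" for x u
  proof -
    have "(\<Sum>v\<in>P. (c x v - u v) *\<^sub>R v) = 0"
      using that c[of x] by (simp add: scaleR_diff_left sum_subtractf)
    then have "(\<Sum>v\<in>P. (c x v - u v) *\<^sub>R g v) = 0"
      using inner_sum_scaleR_if_inner_preserving[OF gram, of "\<lambda>v. c x v - u v" "\<lambda>v. c x v - u v"]
      by simp
    then show ?thesis by (simp add: f_def scaleR_diff_left sum_subtractf)
  qed
  have "linear f"
  proof
    fix x y
    show "f (x + y) = f x + f y"
      using f_eq[of "\<lambda>v. c x v + c y v" "x + y"] c[of x] c[of y]
      by (simp add: f_def scaleR_add_left sum.distrib)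
  next
    fix a x
    have "(\<Sum>v\<in>P. (a * c x v) *\<^sub>R v) = a *\<^sub>R x"
    proof -
      have "(\<Sum>v\<in>P. (a * c x v) *\<^sub>R v) = a *\<^sub>R (\<Sum>v\<in>P. c x v *\<^sub>R v)"
        by (simp add: scaleR_sum_right)
      then show ?thesis by (simp only: c)
    qed
    then show "f (a *\<^sub>R x) = a *\<^sub>R f x"
      using f_eq[of "\<lambda>v. a * c x v" "a *\<^sub>R x"] by (simp add: f_def scaleR_sum_right)
  qed
  moreover have "inner (f x) (f y) = inner x y" for x y
    using inner_sum_scaleR_if_inner_preserving[OF gram] by (simp add: f_def c)
  moreover have "f p = g p" if "p \<in> P" for p
  proof -
    have "(\<Sum>v\<in>P. (if v = p then 1 else 0) *\<^sub>R h v) = h p" for h :: "'a \<Rightarrow> 'a"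
      using that fin by (simp add: if_distrib[of "\<lambda>a. a *\<^sub>R _"] cong: if_cong)
    then show ?thesis using f_eq[of "\<lambda>v. if v = p then 1 else 0" p] by simp
  qed
  ultimately show ?thesis
    using that[of f] by (simp add: orthogonal_transformation_def)
qed

lemma A_mat_eqI:
  assumes "span P = UNIV" and "orthogonal_matrix A" and "\<forall>p\<in>P. A *v p = \<pi> p"
  shows "A_mat P \<pi> = A"
  unfolding A_mat_def
proof (rule the_equality)
  fix B assume B: "orthogonal_matrix B \<and> (\<forall>p\<in>P. B *v p = \<pi> p)"
  have "B *v x = A *v x" for x
    using linear_eq_on_span[OF matrix_vector_mul_linear matrix_vector_mul_linear, of P B A x]
      assms(1,3) B by auto
  then show "B = A" by (simp add: matrix_eq)
qed (use assms in simp)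

lemma A_mat_geom_aut:
  assumes "finite P" and "span P = UNIV" and "geom_aut P \<pi>"
  shows "orthogonal_transformation ((*v) (A_mat P \<pi>))" and "\<forall>p\<in>P. A_mat P \<pi> *v p = \<pi> p"
proof -
  have "\<forall>s\<in>P. \<forall>t\<in>P. inner (\<pi> s) (\<pi> t) = inner s t"
    using assms(3) by (simp add: geom_aut_iff_inner)
  then obtain f where f: "orthogonal_transformation f" "\<forall>p\<in>P. f p = \<pi> p"
    by (rule inner_preserving_extends_to_orthogonal_transformation[OF assms(1,2)])
  then have "orthogonal_matrix (matrix f)" "\<forall>p\<in>P. matrix f *v p = \<pi> p"
    by (simp_all add: orthogonal_transformation_matrix orthogonal_transformation_linear matrix_works)
  with A_mat_eqI[OF assms(2)] show "orthogonal_transformation ((*v) (A_mat P \<pi>))"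
    and "\<forall>p\<in>P. A_mat P \<pi> *v p = \<pi> p"
    by (simp_all add: orthogonal_transformation_matrix_vector_mult)
qed

lemma orth_proj_eqI:
  assumes "subspace W" and "y \<in> W" and "\<And>w. w \<in> W \<Longrightarrow> inner y w = inner x w"
  shows "orth_proj W x = y"
  unfolding orth_proj_def
proof (rule the_equality)
  show "y \<in> W \<and> (\<forall>w\<in>W. orthogonal (x - y) w)"
    using assms(2,3) by (simp add: orthogonal_def inner_diff_left)
next
  fix y' assume y': "y' \<in> W \<and> (\<forall>w\<in>W. orthogonal (x - y') w)"
  have "y' - y \<in> W"
    using y' assms(1,2) by (simp add: subspace_diff)
  then have "inner y (y' - y) = inner y' (y' - y)"
    using assms(3) y' by (simp add: orthogonal_def inner_diff_left)
  then have "inner (y' - y) (y' - y) = 0"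
    by (simp add: inner_diff_left)
  then show "y' = y" by simp
qed

lemma
  assumes "subspace W"
  shows orth_proj_in: "orth_proj W x \<in> W"
    and inner_orth_proj_left: "w \<in> W \<Longrightarrow> inner (orth_proj W x) w = inner x w"
proof -
  obtain y z where "y \<in> span W" "\<And>w. w \<in> span W \<Longrightarrow> orthogonal z w" "x = y + z"
    using orthogonal_subspace_decomp_exists[of W x] by blast
  moreover have "span W = W"
    using assms by simp
  ultimately have "y \<in> W" "\<And>w. w \<in> W \<Longrightarrow> inner y w = inner x w"
    by (simp_all add: orthogonal_def inner_add_left)
  then have "orth_proj W x = y"
    by (rule orth_proj_eqI[OF assms])
  with \<open>y \<in> W\<close> \<open>\<And>w. w \<in> W \<Longrightarrow> inner y w = inner x w\<close>
  show "orth_proj W x \<in> W" "w \<in> W \<Longrightarrow> inner (orth_proj W x) w = inner x w"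
    by simp_all
qed

lemma orth_proj_id:
  assumes "subspace W" and "w \<in> W"
  shows "orth_proj W w = w"
  by (rule orth_proj_eqI[OF assms]) simp

lemma inner_orth_proj_orth_proj:
  assumes "subspace W"
  shows "inner (orth_proj W x) (orth_proj W y) = inner (orth_proj W x) y"
  using inner_orth_proj_left[OF assms orth_proj_in[OF assms], of y x] by (simp add: inner_commute)

lemma linear_orth_proj:
  assumes "subspace W"
  shows "linear (orth_proj W)"
proof
  fix x y
  show "orth_proj W (x + y) = orth_proj W x + orth_proj W y"
    by (rule orth_proj_eqI[OF assms])
      (simp_all add: assms orth_proj_in subspace_add inner_add_left inner_orth_proj_left)
next
  fix c x
  show "orth_proj W (c *\<^sub>R x) = c *\<^sub>R orth_proj W x"
    by (rule orth_proj_eqI[OF assms])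
      (simp_all add: assms orth_proj_in subspace_scale inner_orth_proj_left)
qed

lemma orth_proj_sum_orthogonal:
  assumes "finite L" and "l \<in> L" and "\<forall>m\<in>L. subspace (W m)"
    and "\<forall>m\<in>L. \<forall>m'\<in>L. m \<noteq> m' \<longrightarrow> (\<forall>x\<in>W m. \<forall>y\<in>W m'. orthogonal x y)"
    and "\<forall>m\<in>L. v m \<in> W m"
  shows "orth_proj (W l) (\<Sum>m\<in>L. v m) = v l"
proof (rule orth_proj_eqI)
  fix w assume w: "w \<in> W l"
  have "inner (v m) w = 0" if "m \<in> L - {l}" for m
    using that assms(2,4,5) w unfolding orthogonal_def by blast
  then have "inner (\<Sum>m\<in>L - {l}. v m) w = 0"
    by (simp add: inner_sum_left)
  then show "inner (v l) w = inner (\<Sum>m\<in>L. v m) w"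
    using assms(1,2) by (simp add: sum.remove inner_add_left)
qed (use assms in auto)

lemma inner_eq_sum_inner_orth_proj:
  assumes "finite L" and "\<forall>l\<in>L. subspace (W l)"
    and "\<forall>l\<in>L. \<forall>m\<in>L. l \<noteq> m \<longrightarrow> (\<forall>x\<in>W l. \<forall>y\<in>W m. orthogonal x y)"
    and "\<exists>v. (\<forall>l\<in>L. v l \<in> W l) \<and> x = (\<Sum>l\<in>L. v l)"
  shows "inner x y = (\<Sum>l\<in>L. inner (orth_proj (W l) x) (orth_proj (W l) y))"
proof -
  obtain v where v: "\<forall>l\<in>L. v l \<in> W l" and x: "x = (\<Sum>l\<in>L. v l)"
    using assms(4) by blast
  have "inner x y = (\<Sum>l\<in>L. inner (v l) y)"
    by (simp add: x inner_sum_left)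
  also have "\<dots> = (\<Sum>l\<in>L. inner (orth_proj (W l) x) (orth_proj (W l) y))"
  proof (rule sum.cong)
    fix l assume l: "l \<in> L"
    have "orth_proj (W l) x = v l"
      unfolding x by (rule orth_proj_sum_orthogonal[OF assms(1) l assms(2,3) v])
    then show "inner (v l) y = inner (orth_proj (W l) x) (orth_proj (W l) y)"
      using inner_orth_proj_left[of "W l" "v l" y] assms(2) v l by (simp add: inner_commute)
  qed simp
  finally show ?thesis .
qed

lemma orth_proj_commute_iff_image_eq:
  assumes W: "subspace W" and f: "orthogonal_transformation f"
  shows "f ` W = W \<longleftrightarrow> (\<forall>x. orth_proj W (f x) = f (orth_proj W x))"
proof
  assume fW: "f ` W = W"
  show "\<forall>x. orth_proj W (f x) = f (orth_proj W x)"
  proof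
    fix x
    show "orth_proj W (f x) = f (orth_proj W x)"
    proof (rule orth_proj_eqI[OF W])
      show "f (orth_proj W x) \<in> W"
        using fW orth_proj_in[OF W] by blast
    next
      fix w assume "w \<in> W"
      then obtain u where u: "u \<in> W" "w = f u"
        using fW by blast
      then show "inner (f (orth_proj W x)) w = inner (f x) w"
        using f inner_orth_proj_left[OF W u(1)] by (simp add: orthogonal_transformation_def)
    qed
  qed
next
  assume comm: "\<forall>x. orth_proj W (f x) = f (orth_proj W x)"
  show "f ` W = W"
  proof
    show "f ` W \<subseteq> W"
      using comm orth_proj_in[OF W] orth_proj_id[OF W] by (metis image_subsetI)
    show "W \<subseteq> f ` W"
    proof
      fix w assume w: "w \<in> W"
      obtain y where "w = f y"
        using orthogonal_transformation_surj[OF f] by (metis surjD)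
      then have "w = f (orth_proj W y)"
        using comm orth_proj_id[OF W w] by simp
      then show "w \<in> f ` W"
        using orth_proj_in[OF W] by blast
    qed
  qed
qed

lemma bilinear_inner_compose:
  assumes "linear f" and "linear g"
  shows "bilinear (\<lambda>x y. inner (f x) (g y))"
  using assms unfolding bilinear_def linear_iff
  by (simp add: linear_add linear_scale inner_add_left inner_add_right)

lemma orth_proj_commute_if_inner_orth_proj_preserved:
  fixes f :: "real^'n \<Rightarrow> real^'n"
  assumes W: "subspace W" and f: "orthogonal_transformation f" and span: "span P = UNIV"
    and gram: "\<forall>s\<in>P. \<forall>t\<in>P. inner (orth_proj W (f s)) (orth_proj W (f t))
                           = inner (orth_proj W s) (orth_proj W t)"
  shows "orth_proj W (f x) = f (orth_proj W x)"
proof -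
  let ?pr = "orth_proj W"
  \<comment> \<open>Extend the Gram identity bilinearly, then test \<open>?pr (f x) - f (?pr x)\<close> against the onto map \<open>f\<close>.\<close>
  have lin: "linear ?pr" "linear (?pr \<circ> f)"
    using linear_orth_proj[OF W] orthogonal_transformation_linear[OF f] by (auto intro: linear_compose)
  have bil: "inner (?pr (f y)) (?pr (f z)) = inner (?pr y) (?pr z)" for y z
    using bilinear_eq[OF bilinear_inner_compose[OF lin(2) lin(2)] bilinear_inner_compose[OF lin(1) lin(1)],
        of UNIV P UNIV P] span gram by auto
  have "inner (?pr (f x)) (f y) = inner (f (?pr x)) (f y)" for y
  proof -
    have "inner (?pr (f x)) (f y) = inner (?pr (f x)) (?pr (f y))"
      by (simp add: inner_orth_proj_orth_proj[OF W])
    also have "\<dots> = inner (?pr x) (?pr y)"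
      by (rule bil)
    also have "\<dots> = inner (?pr x) y"
      by (simp add: inner_orth_proj_orth_proj[OF W])
    also have "\<dots> = inner (f (?pr x)) (f y)"
      using f by (simp add: orthogonal_transformation_def)
    finally show ?thesis .
  qed
  then have "inner (?pr (f x) - f (?pr x)) z = 0" for z
    using orthogonal_transformation_surj[OF f] by (metis inner_diff_left right_minus_eq surjD)
  then show ?thesis
    by (metis inner_eq_zero_iff right_minus_eq)
qed

lemma induced_perm_eqI:
  assumes "\<forall>p\<in>P. f (\<pi> p) = h (f p)" and "q \<in> f ` P"
  shows "induced_perm f P \<pi> q = h q"
proof -
  obtain p where p: "p \<in> P" "q = f p"
    using assms(2) by blast
  then have "h q \<in> f ` \<pi> ` (f -` {q} \<inter> P)"
    using assms(1) by (metis IntI imageI singletonI vimageI)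
  moreover have "f ` \<pi> ` (f -` {q} \<inter> P) \<subseteq> {h q}"
    using assms(1) by auto
  ultimately have "f ` \<pi> ` (f -` {q} \<inter> P) = {h q}"
    by auto
  then show ?thesis
    by (simp add: induced_perm_def)
qed

lemma induced_perm_intertwines:
  assumes "respects_proj f P \<pi>" and "p \<in> P"
  shows "f (\<pi> p) = induced_perm f P \<pi> (f p)"
proof -
  have "equiv_class f P (f -` {f p} \<inter> P)"
    using assms(2) by (auto simp: equiv_class_def)
  then obtain q where q: "\<pi> ` (f -` {f p} \<inter> P) = f -` {q} \<inter> P"
    using assms(1) unfolding respects_proj_def equiv_class_def by blast
  then have "\<pi> p \<in> f -` {q} \<inter> P"
    using assms(2) by blast
  have "f ` \<pi> ` (f -` {f p} \<inter> P) = f ` (f -` {q} \<inter> P)"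
    by (simp only: q)
  also have "\<dots> = {q}"
    using \<open>\<pi> p \<in> f -` {q} \<inter> P\<close> by blast
  finally show ?thesis
    using \<open>\<pi> p \<in> f -` {q} \<inter> P\<close> by (simp add: induced_perm_def)
qed

lemma respects_proj_if_intertwined:
  assumes \<pi>: "bij_betw \<pi> P P" and intertw: "\<forall>p\<in>P. f (\<pi> p) = h (f p)" and h: "inj_on h (f ` P)"
  shows "respects_proj f P \<pi>"
  unfolding respects_proj_def equiv_class_def
proof (intro allI impI)
  fix \<Delta> assume "\<exists>q\<in>f ` P. \<Delta> = f -` {q} \<inter> P"
  then obtain p where p: "p \<in> P" and \<Delta>: "\<Delta> = f -` {f p} \<inter> P"
    by blast
  have "\<pi> ` \<Delta> = f -` {h (f p)} \<inter> P"
  proof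
    show "\<pi> ` \<Delta> \<subseteq> f -` {h (f p)} \<inter> P"
      using \<Delta> intertw bij_betwE[OF \<pi>] by auto
    show "f -` {h (f p)} \<inter> P \<subseteq> \<pi> ` \<Delta>"
    proof
      fix p' assume p': "p' \<in> f -` {h (f p)} \<inter> P"
      then obtain p'' where p'': "p'' \<in> P" "p' = \<pi> p''"
        using bij_betw_imp_surj_on[OF \<pi>] by blast
      then have "h (f p'') = h (f p)"
        using p' intertw by auto
      then have "f p'' = f p"
        using h p p'' by (auto dest: inj_onD)
      then show "p' \<in> \<pi> ` \<Delta>"
        using \<Delta> p'' by blast
    qed
  qed
  moreover have "h (f p) \<in> f ` P"
    using p intertw bij_betwE[OF \<pi>] by (metis imageI)
  ultimately show "\<exists>q\<in>f ` P. \<pi> ` \<Delta> = f -` {q} \<inter> P"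
    by blast
qed

lemma induced_geom_aut_if_intertwined:
  fixes h :: "'b::real_normed_vector \<Rightarrow> 'b"
  assumes \<pi>: "bij_betw \<pi> P P" and intertw: "\<forall>p\<in>P. f (\<pi> p) = h (f p)"
    and norm: "\<forall>q\<in>f ` P. norm (h q) = norm q"
    and dist: "\<forall>q\<in>f ` P. \<forall>q'\<in>f ` P. norm (h q - h q') = norm (q - q')"
  shows "induced_geom_aut f P \<pi>"
proof -
  have inj: "inj_on h (f ` P)"
    using dist by (auto intro!: inj_onI) (metis diff_self norm_eq_zero right_minus_eq)
  have "h ` f ` P = f ` \<pi> ` P"
    using intertw by (auto simp: image_image)
  then have "bij_betw h (f ` P) (f ` P)"
    using inj bij_betw_imp_surj_on[OF \<pi>] by (simp add: bij_betw_def)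
  moreover have eq: "\<And>q. q \<in> f ` P \<Longrightarrow> induced_perm f P \<pi> q = h q"
    using induced_perm_eqI[OF intertw] by blast
  ultimately have "bij_betw (induced_perm f P \<pi>) (f ` P) (f ` P)"
    by (simp only: bij_betw_cong[OF eq])
  then have "geom_aut (f ` P) (induced_perm f P \<pi>)"
    using norm dist eq by (simp add: geom_aut_def)
  then show ?thesis
    using respects_proj_if_intertwined[OF \<pi> intertw inj] by (simp add: induced_geom_aut_def)
qed

lemma induced_geom_aut_inner:
  fixes f :: "'a \<Rightarrow> 'b::real_inner"
  assumes "induced_geom_aut f P \<pi>" and "s \<in> P" and "t \<in> P"
  shows "inner (f (\<pi> s)) (f (\<pi> t)) = inner (f s) (f t)"
  using assms induced_perm_intertwines[of f P \<pi>]
  unfolding induced_geom_aut_def geom_aut_iff_inner by simp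

lemma induced_geom_aut_if_A_mat_invariant:
  assumes "finite P" and "span P = UNIV" and "geom_aut P \<pi>"
    and W: "subspace W" and "(\<lambda>x. A_mat P \<pi> *v x) ` W = W"
  shows "induced_geom_aut (orth_proj W) P \<pi>"
proof -
  let ?A = "(*v) (A_mat P \<pi>)"
  note A = A_mat_geom_aut[OF assms(1-3)]
  have "\<forall>x. orth_proj W (?A x) = ?A (orth_proj W x)"
    using orth_proj_commute_iff_image_eq[OF W A(1)] assms(5) by simp
  then have "\<forall>p\<in>P. orth_proj W (\<pi> p) = ?A (orth_proj W p)"
    using A(2) by metis
  moreover have "bij_betw \<pi> P P"
    using assms(3) by (simp add: geom_aut_def)
  ultimately show ?thesis
    using A(1) by (intro induced_geom_aut_if_intertwined[where h = ?A])
      (simp_all add: orthogonal_transformation_norm flip: matrix_vector_mult_diff_distrib)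
qed

lemma A_mat_invariant_if_induced_geom_aut:
  assumes "finite P" and "span P = UNIV" and "geom_aut P \<pi>"
    and W: "subspace W" and "induced_geom_aut (orth_proj W) P \<pi>"
  shows "(\<lambda>x. A_mat P \<pi> *v x) ` W = W"
proof -
  note A = A_mat_geom_aut[OF assms(1-3)]
  have "\<forall>s\<in>P. \<forall>t\<in>P. inner (orth_proj W (A_mat P \<pi> *v s)) (orth_proj W (A_mat P \<pi> *v t))
                   = inner (orth_proj W s) (orth_proj W t)"
    using A(2) induced_geom_aut_inner[OF assms(5)] by simp
  then have "\<forall>x. orth_proj W (A_mat P \<pi> *v x) = A_mat P \<pi> *v orth_proj W x"
    using orth_proj_commute_if_inner_orth_proj_preserved[OF W A(1) assms(2)] by blast
  then show ?thesis
    using orth_proj_commute_iff_image_eq[OF W A(1)] by simp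
qed

lemma geom_aut_if_induced_geom_auts:
  assumes "finite L" and "\<forall>l\<in>L. subspace (W l)"
    and "\<forall>l\<in>L. \<forall>m\<in>L. l \<noteq> m \<longrightarrow> (\<forall>x\<in>W l. \<forall>y\<in>W m. orthogonal x y)"
    and "\<forall>x. \<exists>v. (\<forall>l\<in>L. v l \<in> W l) \<and> x = (\<Sum>l\<in>L. v l)"
    and "bij_betw \<pi> P P" and "\<forall>l\<in>L. induced_geom_aut (orth_proj (W l)) P \<pi>"
  shows "geom_aut P \<pi>"
  unfolding geom_aut_iff_inner
proof (intro conjI ballI)
  fix s t assume "s \<in> P" "t \<in> P"
  note inner_sum = inner_eq_sum_inner_orth_proj[OF assms(1-3) assms(4)[THEN spec]]
  have "inner (\<pi> s) (\<pi> t) = (\<Sum>l\<in>L. inner (orth_proj (W l) (\<pi> s)) (orth_proj (W l) (\<pi> t)))"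
    by (rule inner_sum)
  also have "\<dots> = (\<Sum>l\<in>L. inner (orth_proj (W l) s) (orth_proj (W l) t))"
    using assms(6) induced_geom_aut_inner[OF _ \<open>s \<in> P\<close> \<open>t \<in> P\<close>] by (intro sum.cong) auto
  also have "\<dots> = inner s t"
    by (rule inner_sum[symmetric])
  finally show "inner (\<pi> s) (\<pi> t) = inner s t" .
qed (rule assms(5))

theorem lemma2:
  fixes P :: "(real^'n) set" and W :: "nat \<Rightarrow> (real^'n) set" and r :: nat
    and \<pi> :: "real^'n \<Rightarrow> real^'n"
  assumes "finite P"
    and "\<forall>p\<in>P. \<forall>i. p $ i \<in> \<rat>"
    and "span P = UNIV"
    and "\<forall>l\<in>{1..r}. subspace (W l)"
    and "\<forall>l\<in>{1..r}. \<forall>m\<in>{1..r}. l \<noteq> m \<longrightarrow> (\<forall>x\<in>W l. \<forall>y\<in>W m. orthogonal x y)"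
    and "\<forall>x. \<exists>v. (\<forall>l\<in>{1..r}. v l \<in> W l) \<and> x = (\<Sum>l=1..r. v l)"
    and "bij_betw \<pi> P P"
  shows "(geom_aut P \<pi> \<and> (\<forall>l\<in>{1..r}. (\<lambda>x. A_mat P \<pi> *v x) ` W l = W l))
     \<longleftrightarrow> (\<forall>l\<in>{1..r}. induced_geom_aut (orth_proj (W l)) P \<pi>)"
proof
  assume "geom_aut P \<pi> \<and> (\<forall>l\<in>{1..r}. (\<lambda>x. A_mat P \<pi> *v x) ` W l = W l)"
  then show "\<forall>l\<in>{1..r}. induced_geom_aut (orth_proj (W l)) P \<pi>"
    using induced_geom_aut_if_A_mat_invariant[OF assms(1,3)] assms(4) by blast
next
  assume induced: "\<forall>l\<in>{1..r}. induced_geom_aut (orth_proj (W l)) P \<pi>"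
  then have "geom_aut P \<pi>"
    using geom_aut_if_induced_geom_auts[OF finite_atLeastAtMost assms(4-7)] by blast
  with induced show "geom_aut P \<pi> \<and> (\<forall>l\<in>{1..r}. (\<lambda>x. A_mat P \<pi> *v x) ` W l = W l)"
    using A_mat_invariant_if_induced_geom_aut[OF assms(1,3)] assms(4) by blast
qed

end
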